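(* There exists a cubic (3-regular) bipartite graph on 20 vertices that is not B-factorizable; in fact there is an additional generator $v\in\overline{\mathbf N}(PM(V))\cap\mathrm{problem}(V)$ with $2v\in\mathbf N(PM(V))$ such that $E(v)$ is such a cubic bipartite graph.
   Context: Let $V$ be a finite set with $|V|$ even. $K=\binom{V}{2}$ is the set of 2-element subsets of $V$. An equal partition of $V$ is an unordered pair $\{H,A\}$ of disjoint subsets with $H\cup A=V$ and $|H|=|A|=|V|/2$; $C=C(V)$ is the set of equal partitions. For $c=\{H,A\}\in C$, $B_c$ is the complete bipartite graph with parts $H$ and $A$. Vectors live in $\mathbb N^{K\cup C}$ with $\mathbb N=\{0,1,2,\dots\}$; $v|_K$ denotes the restriction to coordinates in $K$. For $E\subseteq K$, $\chi_E\in\{0,1\}^K$ is its indicator vector; $\chi_K$ is the all-ones vector on $K$. For $E\subseteq K$ and $c\in C$, $\chi_{E,c}\in\mathbb N^{K\cup C}$ has $K$-components $\chi_E$ and $C$-components equal to the indicator of $c$. $PM(V)=\{\chi_{q,c}: c\in C,\ q\text{ a perfect matching of }B_c\}$. For $\mathcal M\subseteq\mathbb N^{K\cup C}$, $\mathbf N(\mathcal M)$ is the set of finite nonnegative integer combinations of elements of $\mathcal M$, and $\overline{\mathbf N}(\mathcal M)=\{v\in\mathbb N^{K\cup C}: kv\in\mathbf N(\mathcal M)\text{ for some integer }k\ge1\}$. For $v\in\mathbb N^{K\cup C}$, $E(v)=\{e\in K: v(e)=1\}$. $\mathrm{problem}(V)$ is the set of $v\in\mathbb N^{K\cup C}$ such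 that $v|_K\le\chi_K$, the graph $(V,E(v))$ is regular, and $\frac{|V|}{2}\sum_{c\in C}v(c)=\sum_{e\in K}v(e)$. A regular graph $G=(V,E)$ is B-factorizable if every $v\in\overline{\mathbf N}(PM(V))$ with $v|_K=\chi_E$ belongs to $\mathbf N(PM(V))$. The monoid $\overline{\mathbf N}(PM(V))$ is pointed, hence has a unique inclusion-minimal generating set (as a monoid), its Hilbert basis. An additional generator is an element of the Hilbert basis of $\overline{\mathbf N}(PM(V))$ that does not belong to $PM(V)$. *)

theory Defs
  imports Main
begin

text \<open>Vectors in N^(K \<union> C) are represented as pairs (K-part, C-part) of
  nat-valued functions, supported on K and C respectively.\<close>

type_synonym 'a vec = "('a set \<Rightarrow> nat) \<times> ('a set set \<Rightarrow> nat)"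

definition Kset :: "'a set \<Rightarrow> 'a set set" where
  "Kset V = {e. e \<subseteq> V \<and> card e = 2}"

definition Cset :: "'a set \<Rightarrow> 'a set set set" where
  "Cset V = {{H, V - H} | H. H \<subseteq> V \<and> 2 * card H = card V}"

definition vecs :: "'a set \<Rightarrow> 'a vec set" where
  "vecs V = {v. (\<forall>e. e \<notin> Kset V \<longrightarrow> fst v e = 0) \<and> (\<forall>c. c \<notin> Cset V \<longrightarrow> snd v c = 0)}"

definition chiEc :: "'a set set \<Rightarrow> 'a set set \<Rightarrow> 'a vec" where
  "chiEc E c = ((\<lambda>e. if e \<in> E then 1 else 0), (\<lambda>c'. if c' = c then 1 else 0))"

definition bip_edges :: "'a set \<Rightarrow> 'a set set \<Rightarrow> 'a set set" where
  "bip_edges V c = {e \<in> Kset V. \<forall>X\<in>c. card (e \<inter> X) = 1}"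

definition perfect_matching_of :: "'a set \<Rightarrow> 'a set set \<Rightarrow> 'a set set \<Rightarrow> bool" where
  "perfect_matching_of V F q \<longleftrightarrow> q \<subseteq> F \<and> (\<forall>x\<in>V. \<exists>!e. e \<in> q \<and> x \<in> e)"

definition PM :: "'a set \<Rightarrow> 'a vec set" where
  "PM V = {chiEc q c | q c. c \<in> Cset V \<and> perfect_matching_of V (bip_edges V c) q}"

definition smul :: "nat \<Rightarrow> 'a vec \<Rightarrow> 'a vec" where
  "smul k v = ((\<lambda>e. k * fst v e), (\<lambda>c. k * snd v c))"

definition Ncone :: "'a vec set \<Rightarrow> 'a vec set" where
  "Ncone M = {v. \<exists>F lam. finite F \<and> F \<subseteq> M \<and>
      v = ((\<lambda>e. \<Sum>m\<in>F. lam m * fst m e), (\<lambda>c. \<Sum>m\<in>F. lam m * snd m c))}"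

definition Nbar :: "'a set \<Rightarrow> 'a vec set \<Rightarrow> 'a vec set" where
  "Nbar V M = {v \<in> vecs V. \<exists>k::nat. k \<ge> 1 \<and> smul k v \<in> Ncone M}"

definition Ev :: "'a set \<Rightarrow> 'a vec \<Rightarrow> 'a set set" where
  "Ev V v = {e \<in> Kset V. fst v e = 1}"

definition degree :: "'a set set \<Rightarrow> 'a \<Rightarrow> nat" where
  "degree E x = card {e \<in> E. x \<in> e}"

definition regular_graph :: "'a set \<Rightarrow> 'a set set \<Rightarrow> bool" where
  "regular_graph V E \<longleftrightarrow> E \<subseteq> Kset V \<and> (\<exists>d. \<forall>x\<in>V. degree E x = d)"

definition cubic_graph :: "'a set \<Rightarrow> 'a set set \<Rightarrow> bool" where
  "cubic_graph V E \<longleftrightarrow> E \<subseteq> Kset V \<and> (\<forall>x\<in>V. degree E x = 3)"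

definition bipartite_graph :: "'a set \<Rightarrow> 'a set set \<Rightarrow> bool" where
  "bipartite_graph V E \<longleftrightarrow> E \<subseteq> Kset V \<and> (\<exists>X. X \<subseteq> V \<and> (\<forall>e\<in>E. card (e \<inter> X) = 1))"

definition problem :: "'a set \<Rightarrow> 'a vec set" where
  "problem V = {v \<in> vecs V. (\<forall>e\<in>Kset V. fst v e \<le> 1) \<and> regular_graph V (Ev V v) \<and>
      (card V div 2) * (\<Sum>c\<in>Cset V. snd v c) = (\<Sum>e\<in>Kset V. fst v e)}"

definition B_factorizable :: "'a set \<Rightarrow> 'a set set \<Rightarrow> bool" where
  "B_factorizable V E \<longleftrightarrow> regular_graph V E \<and>
     (\<forall>v \<in> Nbar V (PM V). fst v = (\<lambda>e. if e \<in> E then 1 else 0) \<longrightarrow> v \<in> Ncone (PM V))"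

text \<open>Hilbert basis: an inclusion-minimal generating set of the monoid Nbar(PM(V)) (unique since the monoid is pointed).\<close>
definition min_generating :: "'a vec set \<Rightarrow> 'a vec set \<Rightarrow> bool" where
  "min_generating S H \<longleftrightarrow> H \<subseteq> S \<and> Ncone H = S \<and> (\<forall>H'. H' \<subset> H \<longrightarrow> Ncone H' \<noteq> S)"

definition hilbert_basis :: "'a vec set \<Rightarrow> 'a vec set" where
  "hilbert_basis S = {v. \<exists>H. min_generating S H \<and> v \<in> H}"

definition additional_generator :: "'a set \<Rightarrow> 'a vec \<Rightarrow> bool" where
  "additional_generator V v \<longleftrightarrow> v \<in> hilbert_basis (Nbar V (PM V)) \<and> v \<notin> PM V"

end

theory Submission
  imports Defs
begin

(* We exhibit a cubic bipartite graph G on V and three equal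
   partitions c0, c1, c2 such that G is the union of two perfect matchings of each B_ci, and take
   v = chi_G + c0 + c1 + c2.  Then 2v is a sum of six elements of PM(V), so v lies in Nbar(PM(V)).
   The heart of the proof is that v is irreducible in the monoid Nbar(PM(V)): it is not a sum of two
   nonzero elements.  Irreducible elements lie in every generating set, hence in the Hilbert basis,
   and an irreducible element outside PM(V) cannot lie in N(PM(V)); this gives both the additional
   generator and the failure of B-factorizability. *)

section \<open>Vectors and the monoids N(M) and Nbar(M)\<close>

lemma finite_Kset: "finite V \<Longrightarrow> finite (Kset V)"
  unfolding Kset_def by (rule finite_subset[of _ "Pow V"]) auto

lemma finite_Cset: "finite V \<Longrightarrow> finite (Cset V)"
  unfolding Cset_def by (rule finite_subset[of _ "Pow (Pow V)"]) auto

lemma Kset_edge_finite: "e \<in> Kset V \<Longrightarrow> finite e"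
  unfolding Kset_def by (auto intro: card_ge_0_finite)

lemma bip_edges_Kset: "bip_edges V c \<subseteq> Kset V"
  unfolding bip_edges_def by auto

definition vzero :: "'a vec" where
  "vzero = ((\<lambda>_. 0), (\<lambda>_. 0))"

definition vadd :: "'a vec \<Rightarrow> 'a vec \<Rightarrow> 'a vec" where
  "vadd a b = ((\<lambda>e. fst a e + fst b e), (\<lambda>c. snd a c + snd b c))"

definition comb :: "'a vec set \<Rightarrow> ('a vec \<Rightarrow> nat) \<Rightarrow> 'a vec" where
  "comb F lam = ((\<lambda>e. \<Sum>m\<in>F. lam m * fst m e), (\<lambda>c. \<Sum>m\<in>F. lam m * snd m c))"

lemma Ncone_comb: "Ncone M = {v. \<exists>F lam. finite F \<and> F \<subseteq> M \<and> v = comb F lam}"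
  unfolding Ncone_def comb_def by simp

lemma comb_empty: "comb {} lam = vzero"
  unfolding comb_def vzero_def by simp

lemma comb_insert:
  "finite F \<Longrightarrow> m \<notin> F \<Longrightarrow> comb (insert m F) lam = vadd (smul (lam m) m) (comb F lam)"
  unfolding comb_def vadd_def smul_def by simp

lemma vadd_comm: "vadd a b = vadd b a"
  unfolding vadd_def by (simp add: add.commute)

lemma smul_vadd: "smul k (vadd a b) = vadd (smul k a) (smul k b)"
  unfolding smul_def vadd_def by (simp add: distrib_left)

lemma smul_smul: "smul k (smul j a) = smul (k * j) a"
  unfolding smul_def by (simp add: mult.assoc)

lemma Ncone_least_submonoid:
  assumes "M \<subseteq> S" "vzero \<in> S" "\<And>a b. a \<in> S \<Longrightarrow> b \<in> S \<Longrightarrow> vadd a b \<in> S"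
  shows "Ncone M \<subseteq> S"
proof
  fix u assume "u \<in> Ncone M"
  then obtain F lam where F: "finite F" "F \<subseteq> M" and u: "u = comb F lam"
    unfolding Ncone_comb by blast
  have multiple: "smul n m \<in> S" if "m \<in> S" for n m
  proof (induction n)
    case 0 then show ?case using assms(2) by (simp add: smul_def vzero_def)
  next
    case (Suc n)
    have "smul (Suc n) m = vadd m (smul n m)" unfolding smul_def vadd_def by simp
    then show ?case using Suc assms(3) that by simp
  qed
  have "comb F lam \<in> S" using F
  proof (induction F rule: finite_induct)
    case empty then show ?case by (simp add: comb_empty assms(2))
  next
    case (insert m F)
    then have "m \<in> S" "comb F lam \<in> S" using assms(1) by auto
    then show ?case using insert assms(3) multiple by (simp add: comb_insert)
  qed
  then show "u \<in> S" using u by simp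
qed

lemma vzero_Ncone: "vzero \<in> Ncone M"
  unfolding Ncone_comb by (auto intro!: exI[of _ "{}"] simp: comb_empty)

lemma generator_Ncone: "m \<in> M \<Longrightarrow> m \<in> Ncone M"
proof -
  assume "m \<in> M"
  moreover have "m = comb {m} (\<lambda>_. 1)" unfolding comb_def by simp
  ultimately show ?thesis unfolding Ncone_comb by blast
qed

lemma Ncone_add:
  assumes "a \<in> Ncone M" "b \<in> Ncone M"
  shows "vadd a b \<in> Ncone M"
proof -
  obtain F1 l1 F2 l2 where F: "finite F1" "F1 \<subseteq> M" "finite F2" "F2 \<subseteq> M"
    and ab: "a = comb F1 l1" "b = comb F2 l2"
    using assms unfolding Ncone_comb by blast
  define l where "l m = (if m \<in> F1 then l1 m else 0) + (if m \<in> F2 then l2 m else 0)" for m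
  have restrict: "(\<Sum>m\<in>F1\<union>F2. (if m \<in> X then f m else 0)) = (\<Sum>m\<in>X. f m)"
    if "X \<subseteq> F1 \<union> F2" for X and f :: "'a vec \<Rightarrow> nat"
    using F that by (simp add: sum.If_cases Int_absorb1)
  have merge: "(\<Sum>m\<in>F1\<union>F2. l m * f m) = (\<Sum>m\<in>F1. l1 m * f m) + (\<Sum>m\<in>F2. l2 m * f m)"
    for f :: "'a vec \<Rightarrow> nat"
  proof -
    have "(\<Sum>m\<in>F1\<union>F2. l m * f m)
        = (\<Sum>m\<in>F1\<union>F2. (if m\<in>F1 then l1 m * f m else 0) + (if m\<in>F2 then l2 m * f m else 0))"
      by (rule sum.cong) (auto simp: l_def distrib_right)
    also have "\<dots> = (\<Sum>m\<in>F1. l1 m * f m) + (\<Sum>m\<in>F2. l2 m * f m)"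
      by (simp only: sum.distrib restrict[of F1] restrict[of F2] Un_upper1 Un_upper2)
    finally show ?thesis .
  qed
  have "vadd a b = comb (F1 \<union> F2) l"
    unfolding ab comb_def vadd_def by (simp add: merge fun_eq_iff)
  then show ?thesis unfolding Ncone_comb using F by blast
qed

lemma smul_Ncone:
  assumes "a \<in> Ncone M"
  shows "smul k a \<in> Ncone M"
proof -
  obtain F l where F: "finite F" "F \<subseteq> M" and a: "a = comb F l"
    using assms unfolding Ncone_comb by blast
  have "smul k a = comb F (\<lambda>m. k * l m)"
    unfolding a comb_def smul_def by (simp add: sum_distrib_left mult.assoc)
  then show ?thesis unfolding Ncone_comb using F by blast
qed

lemma vzero_Nbar: "vzero \<in> Nbar V M"
proof -
  have "smul 1 vzero \<in> Ncone M" using vzero_Ncone by (simp add: smul_def vzero_def)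
  moreover have "vzero \<in> vecs V" unfolding vecs_def vzero_def by simp
  ultimately show ?thesis unfolding Nbar_def by auto
qed

lemma Nbar_add:
  assumes a: "a \<in> Nbar V M" and b: "b \<in> Nbar V M"
  shows "vadd a b \<in> Nbar V M"
proof -
  obtain k j where k: "k \<ge> 1" "smul k a \<in> Ncone M" and j: "j \<ge> 1" "smul j b \<in> Ncone M"
    using a b unfolding Nbar_def by blast
  have "smul (j * k) (vadd a b) = vadd (smul j (smul k a)) (smul k (smul j b))"
    by (simp add: smul_vadd smul_smul mult.commute)
  also have "\<dots> \<in> Ncone M" by (intro Ncone_add smul_Ncone k j)
  finally have "smul (j * k) (vadd a b) \<in> Ncone M" .
  moreover have "j * k \<ge> 1" using k j by simp
  moreover have "vadd a b \<in> vecs V" using a b unfolding Nbar_def vecs_def vadd_def by auto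
  ultimately show ?thesis unfolding Nbar_def by blast
qed

lemma PM_Nbar:
  assumes m: "m \<in> PM V"
  shows "m \<in> Nbar V (PM V)"
proof -
  obtain q c where mq: "m = chiEc q c" "c \<in> Cset V" "perfect_matching_of V (bip_edges V c) q"
    using m unfolding PM_def by blast
  have "q \<subseteq> Kset V" using mq(3) bip_edges_Kset unfolding perfect_matching_of_def by blast
  then have "m \<in> vecs V" using mq unfolding vecs_def chiEc_def by auto
  moreover have "smul 1 m = m" unfolding smul_def by simp
  ultimately show ?thesis unfolding Nbar_def using generator_Ncone[OF m] by (auto intro!: exI[of _ 1])
qed

section \<open>Irreducible elements and the Hilbert basis\<close>

definition irred :: "'a vec set \<Rightarrow> 'a vec \<Rightarrow> bool" where
  "irred S v \<longleftrightarrow> v \<in> S \<and> v \<noteq> vzero \<and>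
     (\<forall>a\<in>S. \<forall>b\<in>S. v = vadd a b \<longrightarrow> a = vzero \<or> b = vzero)"

text \<open>An irreducible element that is a combination of elements of a submonoid S must be one of
  them: peel off one summand and use irreducibility.\<close>

lemma irred_comb:
  assumes ir: "irred S h" and F: "finite F" "F \<subseteq> S" and h: "h = comb F lam"
    and z: "vzero \<in> S" and cl: "\<And>a b. a \<in> S \<Longrightarrow> b \<in> S \<Longrightarrow> vadd a b \<in> S"
  shows "h \<in> F"
proof -
  have "\<exists>m\<in>F. lam m > 0 \<and> m \<noteq> vzero"
  proof (rule ccontr)
    assume none: "\<not> ?thesis"
    have "lam m * fst m e = 0" "lam m * snd m c = 0" if "m \<in> F" for m e c
      using none that by (auto simp: vzero_def)
    then have "(\<Sum>m\<in>F. lam m * fst m e) = 0" "(\<Sum>m\<in>F. lam m * snd m c) = 0" for e c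
      by (auto intro!: sum.neutral simp del: mult_is_0)
    then have "h = vzero"
      unfolding h comb_def vzero_def by (simp add: fun_eq_iff)
    then show False using ir unfolding irred_def by simp
  qed
  then obtain m where m: "m \<in> F" "lam m > 0" "m \<noteq> vzero" by blast
  define rest where "rest = comb F (lam(m := lam m - 1))"
  have rest_S: "rest \<in> S"
    using Ncone_least_submonoid[OF F(2) z cl] F unfolding rest_def Ncone_comb by blast
  have peel: "(\<Sum>m'\<in>F. lam m' * f m') = f m + (\<Sum>m'\<in>F. (lam(m := lam m - 1)) m' * f m')"
    for f :: "'a vec \<Rightarrow> nat"
  proof -
    have "lam m * f m = f m + (lam m - 1) * f m" using m(2) by (cases "lam m") auto
    then show ?thesis using F m by (simp add: sum.remove)
  qed
  have "h = vadd m rest"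
    unfolding h rest_def comb_def vadd_def by (simp only: peel fst_conv snd_conv)
  moreover from this have "rest = vzero" using ir m rest_S F unfolding irred_def by blast
  ultimately have "h = m" unfolding vadd_def vzero_def by simp
  then show ?thesis using m by simp
qed

text \<open>The total weight of a vector; it is additive and vanishes only at zero, which makes
  induction on it possible.\<close>

definition vsize :: "'a set \<Rightarrow> 'a vec \<Rightarrow> nat" where
  "vsize V u = (\<Sum>e\<in>Kset V. fst u e) + (\<Sum>c\<in>Cset V. snd u c)"

lemma vsize_add: "vsize V (vadd a b) = vsize V a + vsize V b"
  unfolding vsize_def vadd_def by (simp add: sum.distrib)

lemma vsize_0:
  assumes fin: "finite V" and u: "u \<in> vecs V" and z: "vsize V u = 0"
  shows "u = vzero"
proof -
  have "fst u e = 0" for e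
  proof (cases "e \<in> Kset V")
    case True
    then show ?thesis using z finite_Kset[OF fin] unfolding vsize_def by simp
  qed (use u in \<open>auto simp: vecs_def\<close>)
  moreover have "snd u c = 0" for c
  proof (cases "c \<in> Cset V")
    case True
    then show ?thesis using z finite_Cset[OF fin] unfolding vsize_def by simp
  qed (use u in \<open>auto simp: vecs_def\<close>)
  ultimately show ?thesis unfolding vzero_def by (simp add: prod_eq_iff fun_eq_iff)
qed

text \<open>Every irreducible element of Nbar(PM(V)) lies in its Hilbert basis: the irreducible
  elements form a generating set (by induction on size), and it is inclusion-minimal because an
  irreducible element is not a combination of other elements.\<close>

lemma irred_hilbert_basis:
  assumes fin: "finite V" and ir: "irred (Nbar V (PM V)) v"
  shows "v \<in> hilbert_basis (Nbar V (PM V))"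
proof -
  let ?S = "Nbar V (PM V)"
  define H where "H = {h. irred ?S h}"
  have HS: "H \<subseteq> ?S" unfolding H_def irred_def by auto
  have generates: "u \<in> Ncone H" if "u \<in> ?S" for u
    using that
  proof (induction "vsize V u" arbitrary: u rule: less_induct)
    case less
    show ?case
    proof (cases "u = vzero \<or> irred ?S u")
      case True
      moreover have "vzero \<in> Ncone H" by (rule vzero_Ncone)
      moreover have "irred ?S u \<Longrightarrow> u \<in> Ncone H" using generator_Ncone[of u H] unfolding H_def by blast
      ultimately show ?thesis by blast
    next
      case False
      then have "\<exists>a\<in>?S. \<exists>b\<in>?S. u = vadd a b \<and> a \<noteq> vzero \<and> b \<noteq> vzero"
        using less.prems unfolding irred_def by blast
      then obtain a b where ab: "a \<in> ?S" "b \<in> ?S" "u = vadd a b" "a \<noteq> vzero" "b \<noteq> vzero"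
        by blast
      have "a \<in> vecs V" "b \<in> vecs V" using ab(1,2) unfolding Nbar_def by auto
      then have "vsize V a \<noteq> 0" "vsize V b \<noteq> 0" using vsize_0[OF fin] ab(4,5) by blast+
      then have "vsize V a < vsize V u" "vsize V b < vsize V u" unfolding ab(3) vsize_add by auto
      then have "a \<in> Ncone H" "b \<in> Ncone H" using less.hyps ab(1,2) by blast+
      then show ?thesis using ab(3) Ncone_add by simp
    qed
  qed
  have "min_generating ?S H"
    unfolding min_generating_def
  proof (intro conjI allI impI)
    show "H \<subseteq> ?S" by (rule HS)
    show "Ncone H = ?S"
      using Ncone_least_submonoid[OF HS vzero_Nbar Nbar_add] generates by blast
    fix H' assume H': "H' \<subset> H"
    then obtain h where h: "h \<in> H" "h \<notin> H'" by blast
    show "Ncone H' \<noteq> ?S"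
    proof
      assume eq: "Ncone H' = ?S"
      have "h \<in> Ncone H'" using h HS eq by blast
      then obtain F lam where F: "finite F" "F \<subseteq> H'" "h = comb F lam"
        unfolding Ncone_comb by blast
      have "F \<subseteq> ?S" using F(2) H' HS by blast
      moreover have "irred ?S h" using h(1) unfolding H_def by simp
      ultimately have "h \<in> F" using irred_comb[OF _ F(1) _ F(3) vzero_Nbar Nbar_add] by blast
      then show False using F h by blast
    qed
  qed
  then show ?thesis using ir unfolding hilbert_basis_def H_def by blast
qed

lemma irred_not_Ncone:
  assumes ir: "irred (Nbar V (PM V)) v" and nv: "v \<notin> PM V"
  shows "v \<notin> Ncone (PM V)"
proof
  assume "v \<in> Ncone (PM V)"
  then obtain F lam where F: "finite F" "F \<subseteq> PM V" "v = comb F lam"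
    unfolding Ncone_comb by blast
  then have "v \<in> F" using irred_comb[OF ir F(1) _ F(3) vzero_Nbar Nbar_add] PM_Nbar by blast
  then show False using F nv by blast
qed

section \<open>Weak duality for Nbar(PM(V)) and its consequences\<close>

lemma perfect_matching_sum:
  fixes g :: "'a \<Rightarrow> int"
  assumes fin: "finite V" and pm: "perfect_matching_of V F q" and FK: "F \<subseteq> Kset V"
  shows "(\<Sum>e\<in>q. \<Sum>x\<in>e. g x) = (\<Sum>x\<in>V. g x)"
proof -
  have qK: "q \<subseteq> Kset V" using pm FK unfolding perfect_matching_of_def by auto
  have edges_finite: "\<forall>e\<in>q. finite e" using qK Kset_edge_finite by blast
  have covers: "\<Union>q = V"
    using qK pm unfolding Kset_def perfect_matching_of_def by blast
  have disjoint: "\<forall>A\<in>q. \<forall>B\<in>q. A \<noteq> B \<longrightarrow> A \<inter> B = {}"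
    using pm covers unfolding perfect_matching_of_def by blast
  show ?thesis
    using sum.Union_disjoint[OF edges_finite disjoint, of g] covers by simp
qed

text \<open>Weak LP duality for a single perfect matching m = chi(q, c): if a vertex weight y_c and an
  edge weight w satisfy y_c(e) \<le> w(e) on the edges of q, then
  y_c(V) = \<Sum>_{e\<in>q} y_c(e) \<le> \<Sum>_{e\<in>q} w(e).\<close>

lemma PM_weak_duality:
  fixes w :: "'a set \<Rightarrow> int" and y :: "'a set set \<Rightarrow> 'a \<Rightarrow> int"
  assumes fin: "finite V" and mPM: "m \<in> PM V"
    and dual: "\<And>c e. snd m c > 0 \<Longrightarrow> e \<in> bip_edges V c \<Longrightarrow> fst m e > 0 \<Longrightarrow> (\<Sum>x\<in>e. y c x) \<le> w e"
  shows "(\<Sum>c\<in>Cset V. int (snd m c) * (\<Sum>x\<in>V. y c x)) \<le> (\<Sum>e\<in>Kset V. int (fst m e) * w e)"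
proof -
  obtain q c where m: "m = chiEc q c" and cC: "c \<in> Cset V"
    and pm: "perfect_matching_of V (bip_edges V c) q"
    using mPM unfolding PM_def by blast
  have qB: "q \<subseteq> bip_edges V c" using pm unfolding perfect_matching_of_def by auto
  have qK: "q \<subseteq> Kset V" using qB bip_edges_Kset by blast
  have "(\<Sum>c'\<in>Cset V. int (snd m c') * (\<Sum>x\<in>V. y c' x))
      = (\<Sum>c'\<in>Cset V. if c' = c then (\<Sum>x\<in>V. y c x) else 0)"
    by (rule sum.cong) (auto simp: m chiEc_def)
  then have lhs: "(\<Sum>c'\<in>Cset V. int (snd m c') * (\<Sum>x\<in>V. y c' x)) = (\<Sum>x\<in>V. y c x)"
    using finite_Cset[OF fin] cC by simp
  have "(\<Sum>e\<in>Kset V. int (fst m e) * w e) = (\<Sum>e\<in>Kset V. if e \<in> q then w e else 0)"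
    by (rule sum.cong) (auto simp: m chiEc_def)
  also have "\<dots> = (\<Sum>e\<in>q. w e)" using finite_Kset[OF fin] qK by (simp add: sum.If_cases Int_absorb1)
  finally have rhs: "(\<Sum>e\<in>Kset V. int (fst m e) * w e) = (\<Sum>e\<in>q. w e)" .
  have "(\<Sum>x\<in>V. y c x) = (\<Sum>e\<in>q. \<Sum>x\<in>e. y c x)"
    by (rule perfect_matching_sum[OF fin pm bip_edges_Kset, symmetric])
  also have "\<dots> \<le> (\<Sum>e\<in>q. w e)"
    by (rule sum_mono) (use qB dual in \<open>auto simp: m chiEc_def\<close>)
  finally show ?thesis using lhs rhs by simp
qed

text \<open>Indeed, k u is a
  combination of perfect matchings whose supports lie in the support of u, and the inequality
  holds for each of them.\<close>

lemma Nbar_weak_duality: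
  fixes u :: "'a vec" and w :: "'a set \<Rightarrow> int" and y :: "'a set set \<Rightarrow> 'a \<Rightarrow> int"
  assumes fin: "finite V" and uN: "u \<in> Nbar V (PM V)"
    and dual: "\<And>c e. c \<in> Cset V \<Longrightarrow> snd u c > 0 \<Longrightarrow> e \<in> bip_edges V c \<Longrightarrow> fst u e > 0 \<Longrightarrow>
                  (\<Sum>x\<in>e. y c x) \<le> w e"
  shows "(\<Sum>c\<in>Cset V. int (snd u c) * (\<Sum>x\<in>V. y c x)) \<le> (\<Sum>e\<in>Kset V. int (fst u e) * w e)"
proof -
  obtain k F lam where k: "k \<ge> 1" and F: "finite F" "F \<subseteq> PM V" and ku: "smul k u = comb F lam"
    using uN unfolding Nbar_def Ncone_comb by blast
  have eK: "k * fst u e = (\<Sum>m\<in>F. lam m * fst m e)" for e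
    using arg_cong[OF ku, of "\<lambda>v. fst v e"] unfolding smul_def comb_def by simp
  have eC: "k * snd u c = (\<Sum>m\<in>F. lam m * snd m c)" for c
    using arg_cong[OF ku, of "\<lambda>v. snd v c"] unfolding smul_def comb_def by simp
  define Y where "Y c = (\<Sum>x\<in>V. y c x)" for c
  have summand: "int (lam m) * (\<Sum>c\<in>Cset V. int (snd m c) * Y c)
      \<le> int (lam m) * (\<Sum>e\<in>Kset V. int (fst m e) * w e)" if mF: "m \<in> F" for m
  proof (cases "lam m = 0")
    case False
    have "snd u c > 0" if "snd m c > 0" for c
    proof -
      have "lam m * snd m c \<le> k * snd u c"
        unfolding eC by (rule member_le_sum[OF mF]) (auto simp: F)
      then show ?thesis using False that by (cases "snd u c") auto
    qed
    moreover have "fst u e > 0" if "fst m e > 0" for e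
    proof -
      have "lam m * fst m e \<le> k * fst u e"
        unfolding eK by (rule member_le_sum[OF mF]) (auto simp: F)
      then show ?thesis using False that by (cases "fst u e") auto
    qed
    moreover have "c \<in> Cset V" if "snd m c > 0" for c
      using mF F that unfolding PM_def chiEc_def by (auto split: if_splits)
    ultimately have "(\<Sum>c\<in>Cset V. int (snd m c) * Y c) \<le> (\<Sum>e\<in>Kset V. int (fst m e) * w e)"
      unfolding Y_def using PM_weak_duality[OF fin] mF F dual by blast
    then show ?thesis by (simp add: mult_left_mono)
  qed simp
  have "int k * (\<Sum>c\<in>Cset V. int (snd u c) * Y c) = (\<Sum>c\<in>Cset V. int (k * snd u c) * Y c)"
    by (simp add: sum_distrib_left mult.assoc)
  also have "\<dots> = (\<Sum>c\<in>Cset V. \<Sum>m\<in>F. int (lam m) * (int (snd m c) * Y c))"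
    by (simp add: eC sum_distrib_right mult.assoc)
  also have "\<dots> = (\<Sum>m\<in>F. int (lam m) * (\<Sum>c\<in>Cset V. int (snd m c) * Y c))"
    by (subst sum.swap) (simp add: sum_distrib_left)
  also have "\<dots> \<le> (\<Sum>m\<in>F. int (lam m) * (\<Sum>e\<in>Kset V. int (fst m e) * w e))"
    by (rule sum_mono) (rule summand)
  also have "\<dots> = (\<Sum>e\<in>Kset V. \<Sum>m\<in>F. int (lam m) * (int (fst m e) * w e))"
    by (subst sum.swap) (simp add: sum_distrib_left)
  also have "\<dots> = (\<Sum>e\<in>Kset V. int (k * fst u e) * w e)"
    by (simp add: eK sum_distrib_right mult.assoc)
  also have "\<dots> = int k * (\<Sum>e\<in>Kset V. int (fst u e) * w e)"
    by (simp add: sum_distrib_left mult.assoc)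
  finally show ?thesis using k unfolding Y_def by (simp add: mult_le_cancel_left)
qed

text \<open>Degree equations: at every vertex, the edge weights of u sum to the total partition
  weight of u (duality with y = \<plusminus>indicator of the vertex).\<close>

lemma Nbar_degree:
  assumes fin: "finite V" and uN: "u \<in> Nbar V (PM V)" and xV: "x \<in> V"
  shows "(\<Sum>e\<in>{e\<in>Kset V. x\<in>e}. fst u e) = (\<Sum>c\<in>Cset V. snd u c)"
proof -
  have fK: "finite (Kset V)" using fin finite_Kset by blast
  have bound: "s * int (\<Sum>c\<in>Cset V. snd u c) \<le> s * int (\<Sum>e\<in>{e\<in>Kset V. x\<in>e}. fst u e)"
    for s :: int
  proof -
    have "(\<Sum>c\<in>Cset V. int (snd u c) * (\<Sum>z\<in>V. if z = x then s else 0))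
        \<le> (\<Sum>e\<in>Kset V. int (fst u e) * (if x \<in> e then s else 0))"
      by (rule Nbar_weak_duality[OF fin uN])
        (use bip_edges_Kset Kset_edge_finite in force)
    then show ?thesis
      using xV fin
      by (simp add: sum.inter_filter[OF fK] sum_distrib_left mult.commute if_distrib cong: if_cong)
  qed
  have "int (\<Sum>c\<in>Cset V. snd u c) = int (\<Sum>e\<in>{e\<in>Kset V. x\<in>e}. fst u e)"
    using bound[of 1] bound[of "-1"] by linarith
  then show ?thesis by (simp only: of_nat_eq_iff)
qed

lemma Nbar_support:
  assumes fin: "finite V" and uN: "u \<in> Nbar V (PM V)" and pos: "fst u e0 > 0"
  shows "\<exists>c\<in>Cset V. snd u c > 0 \<and> e0 \<in> bip_edges V c"
proof (rule ccontr)
  assume none: "\<not> ?thesis"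
  have e0K: "e0 \<in> Kset V" using uN pos unfolding Nbar_def vecs_def by (auto intro: ccontr)
  have "(\<Sum>c\<in>Cset V. int (snd u c) * (\<Sum>z\<in>V. (\<lambda>c z. 0::int) c z))
      \<le> (\<Sum>e\<in>Kset V. int (fst u e) * (if e = e0 then -1 else 0))"
    by (rule Nbar_weak_duality[OF fin uN]) (use none in auto)
  also have "\<dots> = - int (fst u e0)"
    using e0K finite_Kset[OF fin] by (simp add: if_distrib cong: if_cong)
  finally show False using pos by simp
qed

text \<open>An element of Nbar(PM(V)) without partition weight is zero (its degrees vanish).\<close>

lemma Nbar_zero:
  assumes fin: "finite V" and uN: "u \<in> Nbar V (PM V)" and z: "\<forall>c\<in>Cset V. snd u c = 0"
  shows "u = vzero"
proof -
  have u: "u \<in> vecs V" using uN unfolding Nbar_def by auto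
  have "fst u e = 0" for e
  proof (cases "e \<in> Kset V")
    case True
    then have "card e = 2" "e \<subseteq> V" unfolding Kset_def by auto
    then obtain x where x: "x \<in> e" "x \<in> V" by (metis card.empty ex_in_conv subsetD zero_neq_numeral)
    have "(\<Sum>e\<in>{e\<in>Kset V. x\<in>e}. fst u e) = 0" using Nbar_degree[OF fin uN x(2)] z by simp
    then show ?thesis using True x finite_Kset[OF fin] by simp
  qed (use u in \<open>auto simp: vecs_def\<close>)
  moreover have "snd u c = 0" for c
    using z u unfolding vecs_def by (cases "c \<in> Cset V") auto
  ultimately show ?thesis unfolding vzero_def by (simp add: prod_eq_iff fun_eq_iff)
qed

text \<open>A Hall-type obstruction.  If u(c) > 0, the support of u must contain a perfect matching of
  B_c.  This fails if two distinct vertices p, q have all their support edges in B_c going to one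
  common third vertex r.  (Duality with y_c = 1 at p and q, -1 at r, and w = 0.)\<close>

lemma Nbar_hall_obstruction:
  assumes fin: "finite V" and uN: "u \<in> Nbar V (PM V)" and cC: "c \<in> Cset V" and uc: "snd u c \<ge> 1"
    and V: "p \<in> V" "q \<in> V" "r \<in> V" "p \<noteq> q" "p \<noteq> r" "q \<noteq> r"
    and neighbours: "\<And>e. e \<in> bip_edges V c \<Longrightarrow> fst u e > 0 \<Longrightarrow> p \<in> e \<or> q \<in> e \<Longrightarrow>
                         r \<in> e \<and> \<not> (p \<in> e \<and> q \<in> e)"
  shows False
proof -
  define yy :: "'a \<Rightarrow> int"
    where "yy x = (if x = p then 1 else 0) + (if x = q then 1 else 0) - (if x = r then 1 else 0)" for x
  define y where "y c' x = (if c' = c then yy x else 0)" for c' x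
  have sum_yy: "(\<Sum>x\<in>A. yy x) = (if p \<in> A then 1 else 0) + (if q \<in> A then 1 else 0)
      - (if r \<in> A then 1 else 0)" if "finite A" for A
    unfolding yy_def using that by (simp add: sum.distrib sum_subtractf)
  have bound: "(\<Sum>c'\<in>Cset V. int (snd u c') * (\<Sum>x\<in>V. y c' x)) \<le> (\<Sum>e\<in>Kset V. int (fst u e) * 0)"
  proof (rule Nbar_weak_duality[OF fin uN])
    fix c' e assume e: "c' \<in> Cset V" "0 < snd u c'" "e \<in> bip_edges V c'" "0 < fst u e"
    have "finite e" using e(3) bip_edges_Kset Kset_edge_finite by blast
    then show "(\<Sum>x\<in>e. y c' x) \<le> 0"
      unfolding y_def using sum_yy[of e] neighbours[of e] e by (cases "c' = c") auto
  qed
  have "(\<Sum>c'\<in>Cset V. int (snd u c') * (\<Sum>x\<in>V. y c' x))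
      = (\<Sum>c'\<in>Cset V. if c' = c then int (snd u c) else 0)"
    by (rule sum.cong) (auto simp: y_def sum_yy[OF fin] V)
  also have "\<dots> = int (snd u c)" using finite_Cset[OF fin] cC by simp
  finally show False using bound uc by simp
qed

section \<open>The example on 20 vertices\<close>

lemma matching_in_PM:
  assumes cC: "c \<in> Cset V" and dist: "distinct ql" and sub: "set ql \<subseteq> bip_edges V c"
    and once: "\<forall>x\<in>V. length (filter (\<lambda>e. x \<in> e) ql) = 1"
  shows "chiEc (set ql) c \<in> PM V"
proof -
  have "\<exists>!e. e \<in> set ql \<and> x \<in> e" if x: "x \<in> V" for x
  proof -
    have "card (set (filter (\<lambda>e. x \<in> e) ql)) = 1"
      using distinct_card[of "filter (\<lambda>e. x \<in> e) ql"] dist once x by simp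
    then have "card {e \<in> set ql. x \<in> e} = Suc 0" by simp
    then obtain e0 where "{e \<in> set ql. x \<in> e} = {e0}" unfolding card_1_singleton_iff by blast
    then have "(e \<in> set ql \<and> x \<in> e) = (e = e0)" for e by (simp add: set_eq_iff)
    then show ?thesis by (intro ex1I[of _ e0]) simp_all
  qed
  then have "perfect_matching_of V (bip_edges V c) (set ql)"
    unfolding perfect_matching_of_def using sub by blast
  then show ?thesis unfolding PM_def using cC by blast
qed

text \<open>The cubic bipartite graph G (sides {0..9} and {10..19}), three equal partitions
  c_i = {H_i, V - H_i}, and for each c_i two perfect matchings q_i0, q_i1 of B_(c_i) that
  together cover G exactly once.\<close>

definition Gl :: "nat set list" where
  "Gl = [{0,11}, {0,12}, {0,15}, {1,11}, {1,13}, {1,16}, {2,10}, {2,12}, {2,16}, {3,17}, {3,18},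
         {3,19}, {4,13}, {4,14}, {4,19}, {5,14}, {5,16}, {5,18}, {6,10}, {6,13}, {6,15}, {7,11},
         {7,12}, {7,17}, {8,10}, {8,18}, {8,19}, {9,14}, {9,15}, {9,17}]"

definition G :: "nat set set" where
  "G = set Gl"

definition H0 :: "nat set" where "H0 = {4,5,7,8,9,10,11,15,16,18}"
definition H1 :: "nat set" where "H1 = {0,1,2,3,6,9,14,16,17,18}"
definition H2 :: "nat set" where "H2 = {7,8,9,12,13,15,16,17,18,19}"

definition c0 :: "nat set set" where "c0 = {H0, {0..<20} - H0}"
definition c1 :: "nat set set" where "c1 = {H1, {0..<20} - H1}"
definition c2 :: "nat set set" where "c2 = {H2, {0..<20} - H2}"

definition q00 :: "nat set list" where
  "q00 = [{0,11}, {1,16}, {2,10}, {3,18}, {4,13}, {5,14}, {6,15}, {7,12}, {8,19}, {9,17}]"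
definition q01 :: "nat set list" where
  "q01 = [{0,15}, {1,11}, {2,16}, {3,18}, {4,13}, {5,14}, {6,10}, {7,12}, {8,19}, {9,17}]"
definition q10 :: "nat set list" where
  "q10 = [{0,11}, {1,13}, {2,12}, {3,19}, {4,14}, {5,16}, {6,10}, {7,17}, {8,18}, {9,15}]"
definition q11 :: "nat set list" where
  "q11 = [{0,12}, {1,11}, {2,10}, {3,19}, {4,14}, {5,16}, {6,13}, {7,17}, {8,18}, {9,15}]"
definition q20 :: "nat set list" where
  "q20 = [{0,12}, {1,13}, {2,16}, {3,17}, {4,19}, {5,18}, {6,15}, {7,11}, {8,10}, {9,14}]"
definition q21 :: "nat set list" where
  "q21 = [{0,15}, {1,16}, {2,12}, {3,17}, {4,19}, {5,18}, {6,13}, {7,11}, {8,10}, {9,14}]"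

definition vG :: "nat vec" where
  "vG = ((\<lambda>e. if e \<in> G then 1 else 0), (\<lambda>c. if c \<in> {c0, c1, c2} then 1 else 0))"

abbreviation S20 :: "nat vec set" where
  "S20 \<equiv> Nbar {0..<20} (PM {0..<20})"

lemma ball_V20:
  "(\<forall>x\<in>{0..<20::nat}. P x) \<longleftrightarrow> P 0 \<and> P 1 \<and> P 2 \<and> P 3 \<and> P 4 \<and> P 5 \<and> P 6 \<and> P 7 \<and> P 8 \<and> P 9 \<and>
     P 10 \<and> P 11 \<and> P 12 \<and> P 13 \<and> P 14 \<and> P 15 \<and> P 16 \<and> P 17 \<and> P 18 \<and> P 19"
proof -
  have "{0..<20::nat} = {0,1,2,3,4,5,6,7,8,9,10,11,12,13,14,15,16,17,18,19}"
    by (simp add: atLeastLessThan_upt numeral_eq_Suc)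
  then show ?thesis by simp
qed

lemma distinct_Gl: "distinct Gl"
  unfolding Gl_def by (simp add: doubleton_eq_iff)

lemma G_Kset: "G \<subseteq> Kset {0..<20}"
  unfolding G_def Gl_def Kset_def by simp

lemma cubic_G: "cubic_graph {0..<20} G"
proof -
  have "degree G x = length (filter (\<lambda>e. x \<in> e) Gl)" for x
    unfolding degree_def G_def using distinct_card[of "filter (\<lambda>e. x \<in> e) Gl"] distinct_Gl by simp
  then show ?thesis
    unfolding cubic_graph_def using G_Kset by (simp add: ball_V20 Gl_def)
qed

lemma bipartite_G: "bipartite_graph {0..<20} G"
  unfolding bipartite_graph_def
proof (intro conjI exI[of _ "{0..<10}"])
  show "G \<subseteq> Kset {0..<20}" by (rule G_Kset)
  show "\<forall>e\<in>G. card (e \<inter> {0..<10}) = 1" unfolding G_def Gl_def by (simp add: Int_insert_left)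
qed auto

lemma partitions_Cset: "c0 \<in> Cset {0..<20}" "c1 \<in> Cset {0..<20}" "c2 \<in> Cset {0..<20}"
proof -
  have "{H, {0..<20} - H} \<in> Cset {0..<20::nat}" if "H \<subseteq> {0..<20}" "card H = 10" for H
    unfolding Cset_def using that by auto
  then show "c0 \<in> Cset {0..<20}" "c1 \<in> Cset {0..<20}" "c2 \<in> Cset {0..<20}"
    unfolding c0_def c1_def c2_def H0_def H1_def H2_def by simp_all
qed

lemma partitions_differ:
  "x \<in> H \<Longrightarrow> x \<notin> H' \<Longrightarrow> y \<in> H \<Longrightarrow> y \<in> H' \<Longrightarrow> {H, V - H} \<noteq> {H', V - (H'::nat set)}"
  by (auto simp: doubleton_eq_iff)

lemma partitions_distinct: "c0 \<noteq> c1" "c0 \<noteq> c2" "c1 \<noteq> c2"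
proof -
  show "c0 \<noteq> c1" unfolding c0_def c1_def
    by (rule partitions_differ[of 4 _ _ 9]) (simp_all add: H0_def H1_def)
  show "c0 \<noteq> c2" unfolding c0_def c2_def
    by (rule partitions_differ[of 4 _ _ 7]) (simp_all add: H0_def H2_def)
  show "c1 \<noteq> c2" unfolding c1_def c2_def
    by (rule partitions_differ[of 0 _ _ 9]) (simp_all add: H1_def H2_def)
qed

lemma bip_edges_iff:
  assumes "H \<subseteq> V" "a \<in> V" "b \<in> V" "a \<noteq> b"
  shows "{a,b} \<in> bip_edges V {H, V - H} \<longleftrightarrow> (a \<in> H \<longleftrightarrow> b \<notin> H)"
  using assms unfolding bip_edges_def Kset_def
  by (cases "a \<in> H"; cases "b \<in> H") (auto simp: Int_insert_left)

lemma bip_edges_partitions: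
  assumes "a \<in> {0..<20}" "b \<in> {0..<20}" "a \<noteq> b"
  shows "{a,b} \<in> bip_edges {0..<20} c0 \<longleftrightarrow> (a \<in> H0 \<longleftrightarrow> b \<notin> H0)"
    and "{a,b} \<in> bip_edges {0..<20} c1 \<longleftrightarrow> (a \<in> H1 \<longleftrightarrow> b \<notin> H1)"
    and "{a,b} \<in> bip_edges {0..<20} c2 \<longleftrightarrow> (a \<in> H2 \<longleftrightarrow> b \<notin> H2)"
  unfolding c0_def c1_def c2_def
  by (rule bip_edges_iff; use assms in \<open>auto simp: H0_def H1_def H2_def\<close>)+

lemma six_matchings:
  "chiEc (set q00) c0 \<in> PM {0..<20}" "chiEc (set q01) c0 \<in> PM {0..<20}"
  "chiEc (set q10) c1 \<in> PM {0..<20}" "chiEc (set q11) c1 \<in> PM {0..<20}"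
  "chiEc (set q20) c2 \<in> PM {0..<20}" "chiEc (set q21) c2 \<in> PM {0..<20}"
  by (rule matching_in_PM[OF partitions_Cset(1)] matching_in_PM[OF partitions_Cset(2)]
        matching_in_PM[OF partitions_Cset(3)];
      simp add: q00_def q01_def q10_def q11_def q20_def q21_def doubleton_eq_iff ball_V20
        bip_edges_partitions H0_def H1_def H2_def)+

text \<open>Each edge of G lies in exactly two of the six matchings, so 2 vG is their sum.\<close>

lemma vG_double:
  "smul 2 vG = vadd (chiEc (set q00) c0) (vadd (chiEc (set q01) c0) (vadd (chiEc (set q10) c1)
     (vadd (chiEc (set q11) c1) (vadd (chiEc (set q20) c2) (chiEc (set q21) c2)))))"
proof -
  let ?ind = "\<lambda>q e. if e \<in> set q then 1 else (0::nat)"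
  have edges: "2 * (if e \<in> G then 1 else 0)
      = ?ind q00 e + (?ind q01 e + (?ind q10 e + (?ind q11 e + (?ind q20 e + ?ind q21 e))))" for e
  proof (cases "e \<in> G")
    case True
    have "\<forall>e\<in>set Gl. 2 * (if e \<in> G then 1 else 0)
      = ?ind q00 e + (?ind q01 e + (?ind q10 e + (?ind q11 e + (?ind q20 e + ?ind q21 e))))"
      unfolding G_def Gl_def q00_def q01_def q10_def q11_def q20_def q21_def
      by (simp add: doubleton_eq_iff)
    then show ?thesis using True unfolding G_def by blast
  next
    case False
    have "set q00 \<subseteq> G" "set q01 \<subseteq> G" "set q10 \<subseteq> G" "set q11 \<subseteq> G" "set q20 \<subseteq> G"
      "set q21 \<subseteq> G"
      unfolding G_def Gl_def q00_def q01_def q10_def q11_def q20_def q21_def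
      by (simp_all add: doubleton_eq_iff)
    then show ?thesis using False by auto
  qed
  show ?thesis
    unfolding smul_def vadd_def vG_def chiEc_def
    by (simp add: edges fun_eq_iff partitions_distinct partitions_distinct[symmetric])
qed

lemma vG_vecs: "vG \<in> vecs {0..<20}"
  unfolding vecs_def vG_def using G_Kset partitions_Cset by auto

lemma vG_double_Ncone: "smul 2 vG \<in> Ncone (PM {0..<20})"
  unfolding vG_double by (intro Ncone_add generator_Ncone six_matchings)

lemma vG_Nbar: "vG \<in> S20"
  unfolding Nbar_def using vG_vecs vG_double_Ncone by (auto intro!: exI[of _ 2])

lemma Ev_vG: "Ev {0..<20} vG = G"
  unfolding Ev_def vG_def using G_Kset by auto

lemma vG_problem: "vG \<in> problem {0..<20}"
proof -
  have fK: "finite (Kset {0..<20::nat})" and fC: "finite (Cset {0..<20::nat})"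
    by (simp_all add: finite_Kset finite_Cset)
  have "(\<Sum>e\<in>Kset {0..<20}. fst vG e) = (\<Sum>e\<in>G. 1)" unfolding vG_def
    by (rule sum.mono_neutral_cong_right[OF fK G_Kset]) auto
  also have "\<dots> = 30" using distinct_card[OF distinct_Gl] unfolding G_def by (simp add: Gl_def)
  finally have edges: "(\<Sum>e\<in>Kset {0..<20}. fst vG e) = 30" .
  have Csub: "{c0, c1, c2} \<subseteq> Cset {0..<20}" using partitions_Cset by auto
  have "(\<Sum>c\<in>Cset {0..<20}. snd vG c) = (\<Sum>c\<in>{c0, c1, c2}. 1)" unfolding vG_def
    by (rule sum.mono_neutral_cong_right[OF fC Csub]) auto
  also have "\<dots> = 3" using partitions_distinct by simp
  finally have parts: "(\<Sum>c\<in>Cset {0..<20}. snd vG c) = 3" .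
  show ?thesis unfolding problem_def
    using vG_vecs edges parts Ev_vG cubic_G unfolding regular_graph_def cubic_graph_def
    by (auto simp: vG_def)
qed

lemma vG_not_PM: "vG \<notin> PM {0..<20}"
proof
  assume "vG \<in> PM {0..<20}"
  then obtain q c where eq: "vG = chiEc q c" unfolding PM_def by blast
  have single: "snd vG c' = (if c' = c then 1 else 0)" for c' unfolding eq by (simp add: chiEc_def)
  have "c0 = c" using single[of c0] by (simp add: vG_def split: if_splits)
  moreover have "c1 = c" using single[of c1] by (simp add: vG_def split: if_splits)
  ultimately show False using partitions_distinct by simp
qed

lemma vG_split:
  assumes "vG = vadd a b"
  shows "fst a e + fst b e = (if e \<in> G then 1 else 0)"
    and "snd a c + snd b c = (if c \<in> {c0, c1, c2} then 1 else 0)"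
  using arg_cong[OF assms, of "\<lambda>v. fst v e"] arg_cong[OF assms, of "\<lambda>v. snd v c"]
  by (simp_all add: vadd_def vG_def)

text \<open>If a summand a of vG carries a single partition c, then its edges form a perfect
  matching of G inside B_c: the degree equations hold with value 1, and a vanishes off B_c.\<close>

lemma single_partition_summand:
  assumes aS: "a \<in> S20" and vab: "vG = vadd a b" and cC: "c \<in> Cset {0..<20}"
    and sa: "\<And>c'. snd a c' = (if c' = c then 1 else 0)"
  shows "\<forall>x\<in>{0..<20}. sum_list (map (\<lambda>e. if x \<in> e then fst a e else 0) Gl) = 1"
    and "\<forall>e\<in>set Gl. e \<notin> bip_edges {0..<20} c \<longrightarrow> fst a e = 0"
proof -
  have fK: "finite (Kset {0..<20::nat})" and fC: "finite (Cset {0..<20::nat})"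
    by (simp_all add: finite_Kset finite_Cset)
  have off_G: "fst a e = 0" if "e \<notin> G" for e using vG_split(1)[OF vab, of e] that by simp
  have "(\<Sum>e\<in>{e\<in>Kset {0..<20}. x\<in>e}. fst a e) = sum_list (map (\<lambda>e. if x \<in> e then fst a e else 0) Gl)"
    for x
  proof -
    have "(\<Sum>e\<in>{e\<in>Kset {0..<20}. x\<in>e}. fst a e) = (\<Sum>e\<in>Kset {0..<20}. if x \<in> e then fst a e else 0)"
      by (rule sum.inter_filter[OF fK])
    also have "\<dots> = (\<Sum>e\<in>G. if x \<in> e then fst a e else 0)"
      by (rule sum.mono_neutral_right[OF fK G_Kset]) (use off_G in auto)
    also have "\<dots> = sum_list (map (\<lambda>e. if x \<in> e then fst a e else 0) Gl)"
      unfolding G_def by (rule sum_list_distinct_conv_sum_set[OF distinct_Gl, symmetric])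
    finally show ?thesis .
  qed
  moreover have "(\<Sum>c'\<in>Cset {0..<20}. snd a c') = 1" unfolding sa using fC cC by simp
  ultimately show "\<forall>x\<in>{0..<20}. sum_list (map (\<lambda>e. if x \<in> e then fst a e else 0) Gl) = 1"
    using Nbar_degree[OF _ aS] by simp
  have "fst a e = 0" if "e \<notin> bip_edges {0..<20} c" for e
  proof (rule ccontr)
    assume "fst a e \<noteq> 0"
    then obtain c' where "snd a c' > 0" "e \<in> bip_edges {0..<20} c'"
      using Nbar_support[OF _ aS] by blast
    then show False using sa[of c'] that by (simp split: if_splits)
  qed
  then show "\<forall>e\<in>set Gl. e \<notin> bip_edges {0..<20} c \<longrightarrow> fst a e = 0" by blast
qed

lemma complement_obstruction:
  assumes bS: "b \<in> S20" and vab: "vG = vadd a b" and cC: "c \<in> Cset {0..<20}" and bc: "snd b c \<ge> 1"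
    and taken: "fst a e1 = 1" "fst a e2 = 1"
    and V: "p \<in> {0..<20}" "q \<in> {0..<20}" "r \<in> {0..<20}" "p \<noteq> q" "p \<noteq> r" "q \<noteq> r"
    and neighbours: "\<forall>e\<in>set Gl. e \<in> bip_edges {0..<20} c \<longrightarrow> e \<noteq> e1 \<longrightarrow> e \<noteq> e2 \<longrightarrow>
                       p \<in> e \<or> q \<in> e \<longrightarrow> r \<in> e \<and> \<not> (p \<in> e \<and> q \<in> e)"
  shows False
proof (rule Nbar_hall_obstruction[OF _ bS cC bc V])
  fix e assume e: "e \<in> bip_edges {0..<20} c" "0 < fst b e" "p \<in> e \<or> q \<in> e"
  have "e \<in> set Gl" "e \<noteq> e1" "e \<noteq> e2"
    using vG_split(1)[OF vab, of e] vG_split(1)[OF vab, of e1] vG_split(1)[OF vab, of e2] taken e(2)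
    unfolding G_def by (auto split: if_splits)
  then show "r \<in> e \<and> \<not> (p \<in> e \<and> q \<in> e)" using neighbours e by blast
qed simp

text \<open>The core of the proof: no summand of vG carries exactly one partition c_i.  Otherwise its
  edges form one of the two perfect matchings of G inside B_(c_i) (decided by a single edge and
  the degree equations), and the other summand then violates the Hall obstruction for a
  remaining partition.\<close>

lemma no_split_c0:
  assumes aS: "a \<in> S20" and bS: "b \<in> S20" and vab: "vG = vadd a b"
    and sa: "\<And>c. snd a c = (if c = c0 then 1 else 0)"
  shows False
proof -
  note matching = single_partition_summand[OF aS vab partitions_Cset(1) sa, unfolded ball_V20 Gl_def]
  have bc: "snd b c2 \<ge> 1" using vG_split(2)[OF vab, of c2] sa partitions_distinct by auto
  have "fst a {0,11} \<le> 1" using vG_split(1)[OF vab, of "{0,11}"] by (simp split: if_splits)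
  then consider "fst a {0,11} = 1" | "fst a {0,11} = 0" by linarith
  then show False
  proof cases
    case 1
    with matching have "fst a {1,16} = 1" "fst a {6,15} = 1"
      by (simp_all add: bip_edges_partitions H0_def)
    then show False
      by (rule complement_obstruction[OF bS vab partitions_Cset(3) bc, of _ _ 1 6 13])
        (simp_all add: Gl_def bip_edges_partitions H2_def)
  next
    case 2
    with matching have "fst a {0,15} = 1" "fst a {2,16} = 1"
      by (simp_all add: bip_edges_partitions H0_def)
    then show False
      by (rule complement_obstruction[OF bS vab partitions_Cset(3) bc, of _ _ 0 2 12])
        (simp_all add: Gl_def bip_edges_partitions H2_def)
  qed
qed

lemma no_split_c1:
  assumes aS: "a \<in> S20" and bS: "b \<in> S20" and vab: "vG = vadd a b"
    and sa: "\<And>c. snd a c = (if c = c1 then 1 else 0)"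
  shows False
proof -
  note matching = single_partition_summand[OF aS vab partitions_Cset(2) sa, unfolded ball_V20 Gl_def]
  have bc: "snd b c2 \<ge> 1" using vG_split(2)[OF vab, of c2] sa partitions_distinct by auto
  have "fst a {0,11} \<le> 1" using vG_split(1)[OF vab, of "{0,11}"] by (simp split: if_splits)
  then consider "fst a {0,11} = 1" | "fst a {0,11} = 0" by linarith
  then show False
  proof cases
    case 1
    with matching have "fst a {1,13} = 1" "fst a {2,12} = 1"
      by (simp_all add: bip_edges_partitions H1_def)
    then show False
      by (rule complement_obstruction[OF bS vab partitions_Cset(3) bc, of _ _ 1 2 16])
        (simp_all add: Gl_def bip_edges_partitions H2_def)
  next
    case 2
    with matching have "fst a {0,12} = 1" "fst a {6,13} = 1"
      by (simp_all add: bip_edges_partitions H1_def)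
    then show False
      by (rule complement_obstruction[OF bS vab partitions_Cset(3) bc, of _ _ 0 6 15])
        (simp_all add: Gl_def bip_edges_partitions H2_def)
  qed
qed

lemma no_split_c2:
  assumes aS: "a \<in> S20" and bS: "b \<in> S20" and vab: "vG = vadd a b"
    and sa: "\<And>c. snd a c = (if c = c2 then 1 else 0)"
  shows False
proof -
  note matching = single_partition_summand[OF aS vab partitions_Cset(3) sa, unfolded ball_V20 Gl_def]
  have bc: "snd b c0 \<ge> 1" using vG_split(2)[OF vab, of c0] sa partitions_distinct by auto
  have "fst a {0,12} \<le> 1" using vG_split(1)[OF vab, of "{0,12}"] by (simp split: if_splits)
  then consider "fst a {0,12} = 1" | "fst a {0,12} = 0" by linarith
  then show False
  proof cases
    case 1
    with matching have "fst a {2,16} = 1" "fst a {6,15} = 1"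
      by (simp_all add: bip_edges_partitions H2_def)
    then show False
      by (rule complement_obstruction[OF bS vab partitions_Cset(1) bc, of _ _ 2 6 10])
        (simp_all add: Gl_def bip_edges_partitions H0_def)
  next
    case 2
    with matching have "fst a {0,15} = 1" "fst a {1,16} = 1"
      by (simp_all add: bip_edges_partitions H2_def)
    then show False
      by (rule complement_obstruction[OF bS vab partitions_Cset(1) bc, of _ _ 0 1 11])
        (simp_all add: Gl_def bip_edges_partitions H0_def)
  qed
qed

lemma no_single_partition_summand:
  assumes aS: "a \<in> S20" and bS: "b \<in> S20" and vab: "vG = vadd a b"
    and one: "snd a c0 + snd a c1 + snd a c2 = 1"
  shows False
proof -
  have outside: "snd a c = 0" if "c \<notin> {c0, c1, c2}" for c
    using vG_split(2)[OF vab, of c] that by simp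
  have "snd a c \<le> 1" for c using vG_split(2)[OF vab, of c] by (simp split: if_splits)
  then have "(snd a c0 = 1 \<and> snd a c1 = 0 \<and> snd a c2 = 0) \<or> (snd a c0 = 0 \<and> snd a c1 = 1 \<and> snd a c2 = 0)
      \<or> (snd a c0 = 0 \<and> snd a c1 = 0 \<and> snd a c2 = 1)"
    using one by linarith
  then show False
  proof (elim disjE conjE)
    assume "snd a c0 = 1" "snd a c1 = 0" "snd a c2 = 0"
    then have "snd a c = (if c = c0 then 1 else 0)" for c
      using outside[of c] partitions_distinct by (cases "c = c0"; cases "c = c1"; cases "c = c2") auto
    then show False by (rule no_split_c0[OF aS bS vab])
  next
    assume "snd a c0 = 0" "snd a c1 = 1" "snd a c2 = 0"
    then have "snd a c = (if c = c1 then 1 else 0)" for c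
      using outside[of c] partitions_distinct by (cases "c = c0"; cases "c = c1"; cases "c = c2") auto
    then show False by (rule no_split_c1[OF aS bS vab])
  next
    assume "snd a c0 = 0" "snd a c1 = 0" "snd a c2 = 1"
    then have "snd a c = (if c = c2 then 1 else 0)" for c
      using outside[of c] partitions_distinct by (cases "c = c0"; cases "c = c1"; cases "c = c2") auto
    then show False by (rule no_split_c2[OF aS bS vab])
  qed
qed

text \<open>vG is irreducible: in a splitting vG = a + b the three partitions are shared out between
  the summands; a summand without partitions is zero, so if both summands are nonzero one of them
  carries exactly one partition.\<close>

lemma vG_irreducible: "irred S20 vG"
  unfolding irred_def
proof (intro conjI ballI impI)
  show "vG \<in> S20" by (rule vG_Nbar)
  show "vG \<noteq> vzero"
  proof
    assume "vG = vzero"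
    then have "snd vG c0 = snd vzero c0" by simp
    then show False by (simp add: vG_def vzero_def)
  qed
  have zero: "x = vzero" if xS: "x \<in> S20" and vxy: "vG = vadd x y"
    and none: "snd x c0 + snd x c1 + snd x c2 = 0" for x y
  proof (rule Nbar_zero[OF _ xS])
    show "\<forall>c\<in>Cset {0..<20}. snd x c = 0"
    proof
      fix c
      show "snd x c = 0"
        using vG_split(2)[OF vxy, of c] none by (cases "c \<in> {c0, c1, c2}") auto
    qed
  qed simp
  fix a b assume aS: "a \<in> S20" and bS: "b \<in> S20" and vab: "vG = vadd a b"
  have vba: "vG = vadd b a" using vab vadd_comm by metis
  show "a = vzero \<or> b = vzero"
  proof (rule ccontr)
    assume "\<not> (a = vzero \<or> b = vzero)"
    then have a_nz: "a \<noteq> vzero" and b_nz: "b \<noteq> vzero" by simp_all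
    have "snd a c0 + snd a c1 + snd a c2 \<noteq> 0" using zero[OF aS vab] a_nz by metis
    moreover have "snd b c0 + snd b c1 + snd b c2 \<noteq> 0" using zero[OF bS vba] b_nz by metis
    moreover have "(snd a c0 + snd a c1 + snd a c2) + (snd b c0 + snd b c1 + snd b c2) = 3"
      using vG_split(2)[OF vab, of c0] vG_split(2)[OF vab, of c1] vG_split(2)[OF vab, of c2]
      by simp
    ultimately have "snd a c0 + snd a c1 + snd a c2 = 1 \<or> snd b c0 + snd b c1 + snd b c2 = 1"
      by arith
    then show False
      using no_single_partition_summand[OF aS bS vab] no_single_partition_summand[OF bS aS vba]
      by blast
  qed
qed

theorem mainTheorem14:
  shows "\<exists>v :: nat vec.
     additional_generator {0..<20} v \<and>
     v \<in> Nbar {0..<20} (PM {0..<20}) \<and> v \<in> problem {0..<20} \<and>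
     smul 2 v \<in> Ncone (PM {0..<20}) \<and>
     cubic_graph {0..<20} (Ev {0..<20} v) \<and> bipartite_graph {0..<20} (Ev {0..<20} v) \<and>
     \<not> B_factorizable {0..<20} (Ev {0..<20} v)"
proof (intro exI[of _ vG] conjI)
  show "additional_generator {0..<20} vG"
    unfolding additional_generator_def
    using irred_hilbert_basis[OF _ vG_irreducible] vG_not_PM by simp
  show "vG \<in> S20" by (rule vG_Nbar)
  show "vG \<in> problem {0..<20}" by (rule vG_problem)
  show "smul 2 vG \<in> Ncone (PM {0..<20})" by (rule vG_double_Ncone)
  show "cubic_graph {0..<20} (Ev {0..<20} vG)" unfolding Ev_vG by (rule cubic_G)
  show "bipartite_graph {0..<20} (Ev {0..<20} vG)" unfolding Ev_vG by (rule bipartite_G)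
  have "fst vG = (\<lambda>e. if e \<in> Ev {0..<20} vG then 1 else 0)" unfolding Ev_vG by (simp add: vG_def)
  then show "\<not> B_factorizable {0..<20} (Ev {0..<20} vG)"
    unfolding B_factorizable_def using vG_Nbar irred_not_Ncone[OF vG_irreducible vG_not_PM] by blast
qed

end
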